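(* There is a universal absolute constant $C>0$ such that the following holds. Consider any bandit algorithm, fix a round $t$ and parameters $\varepsilon,r>0$, and fix an arm $i$. Suppose that $\mathcal F_t$ almost surely contains at least $\varepsilon^{-2}$ samples of arm $i$. Let $\hat\mu_i$ be a posterior sample for $\mu_i$ at round $t$. Then $$\Pr\big[|\hat\mu_i-\mu_i|\geq r\varepsilon\big]\leq C e^{-r^2/C}\quad\text{and}\quad \Pr\big[|\mathbb E[\mu_i\mid\mathcal F_t]-\mu_i|\geq r\varepsilon\big]\leq C e^{-r^2/C}.$$ More generally, let $q=(q_1,\dots,q_K)$ be a probability distribution over the arms, let $\mu_q=\sum_i q_i\mu_i$ and $\hat\mu_q=\sum_i q_i\hat\mu_i$, where $(\hat\mu_1,\dots,\hat\mu_K)$ is a posterior sample of $(\mu_1,\dots,\mu_K)$ at round $t$. If $\mathcal F_t$ almost surely contains at least $\varepsilon^{-2}$ samples of each arm $i$ with $q_i\neq 0$, then the two displayed inequalities hold with $i$ replaced by $q$ (i.e. with $\hat\mu_q,\mu_q$ and $\mathbb E[\mu_q\mid\mathcal F_t]$).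
   Context: Setting (Bayesian multi-armed bandit with Bernoulli rewards): there are $K$ arms; each arm $i$ has a mean reward $\mu_i\in[0,1]$, and $\mu_1,\dots,\mu_K$ are drawn independently with $\mu_i\sim\mathcal P_i$ for known priors $\mathcal P_i$ on $[0,1]$. Given the mean rewards, each arm $i$ has an i.i.d. sequence of $\{0,1\}$-valued samples with mean $\mu_i$ (independent across arms); the $n$-th time arm $i$ is chosen, its $n$-th sample is observed as the reward. A bandit algorithm (possibly randomized) chooses in each round an arm based on the past chosen arms and observed rewards. $\mathcal F_t$ denotes the $\sigma$-algebra generated by the chosen arms and realized rewards in rounds before $t$. A posterior sample of a random quantity $X$ (a function of $\mu_1,\dots,\mu_K$) at round $t$ is a draw, independent of everything else given $\mathcal F_t$, from the conditional distribution of $X$ given $\mathcal F_t$. *)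

theory Defs
  imports "HOL-Probability.Probability"
begin

text \<open>Arms are natural numbers i < K; a mean-reward vector is mu :: nat => real
  (an element of the product space over {..<K}).  A history (the data generating
  the sigma-algebra F_t) is the list of (chosen arm, realized reward) of the rounds
  before round t; rounds are numbered 0,1,2,..., so before round t there are t entries.
  A (possibly randomized) algorithm is a policy mapping the past history to a
  distribution over the next arm.\<close>

type_synonym history = "(nat \<times> bool) list"

primrec hist_pmf :: "(history \<Rightarrow> nat pmf) \<Rightarrow> (nat \<Rightarrow> real) \<Rightarrow> nat \<Rightarrow> history pmf" where
  "hist_pmf pol mu 0 = return_pmf []"
| "hist_pmf pol mu (Suc n) =
     bind_pmf (hist_pmf pol mu n) (\<lambda>h.
       bind_pmf (pol h) (\<lambda>a.
         map_pmf (\<lambda>b. h @ [(a, b)]) (bernoulli_pmf (mu a))))"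

definition prior :: "nat \<Rightarrow> (nat \<Rightarrow> real measure) \<Rightarrow> (nat \<Rightarrow> real) measure" where
  "prior K P = PiM {..<K} P"

definition bandit_joint ::
  "nat \<Rightarrow> (nat \<Rightarrow> real measure) \<Rightarrow> (history \<Rightarrow> nat pmf) \<Rightarrow> nat \<Rightarrow> ((nat \<Rightarrow> real) \<times> history) measure" where
  "bandit_joint K P pol t =
     density (prior K P \<Otimes>\<^sub>M count_space UNIV)
       (\<lambda>(mu, h). ennreal (pmf (hist_pmf pol mu t) h))"

text \<open>The sigma-algebra F_t, generated by the history, as a sub-sigma-algebra of the joint law.\<close>
definition hist_algebra ::
  "nat \<Rightarrow> (nat \<Rightarrow> real measure) \<Rightarrow> (history \<Rightarrow> nat pmf) \<Rightarrow> nat \<Rightarrow> ((nat \<Rightarrow> real) \<times> history) measure" where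
  "hist_algebra K P pol t =
     vimage_algebra (space (bandit_joint K P pol t)) snd (count_space UNIV)"

definition evidence ::
  "nat \<Rightarrow> (nat \<Rightarrow> real measure) \<Rightarrow> (history \<Rightarrow> nat pmf) \<Rightarrow> nat \<Rightarrow> history \<Rightarrow> real" where
  "evidence K P pol t h = (\<integral>nu. pmf (hist_pmf pol nu t) h \<partial>prior K P)"

text \<open>Joint law of (mu, history, nu) where nu is a posterior sample of mu at round t:
  given the history h, nu is drawn independently of mu from the posterior
  (prior reweighted by the likelihood of h, by Bayes' rule).\<close>
definition bandit_post_model ::
  "nat \<Rightarrow> (nat \<Rightarrow> real measure) \<Rightarrow> (history \<Rightarrow> nat pmf) \<Rightarrow> nat \<Rightarrow>
   ((nat \<Rightarrow> real) \<times> history \<times> (nat \<Rightarrow> real)) measure" where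
  "bandit_post_model K P pol t =
     density (prior K P \<Otimes>\<^sub>M (count_space UNIV \<Otimes>\<^sub>M prior K P))
       (\<lambda>(mu, h, nu). ennreal (pmf (hist_pmf pol mu t) h * pmf (hist_pmf pol nu t) h
                                 / evidence K P pol t h))"

definition num_samples :: "history \<Rightarrow> nat \<Rightarrow> nat" where
  "num_samples h i = length (filter (\<lambda>x. fst x = i) h)"

end

theory Submission
  imports Defs
begin

(*
  For one arm, exp (theta (S - mu N) - theta^2 N / 8), with N samples and S successes among them,
  is a supermartingale along the history by Hoeffding's lemma, whatever the policy.  Peeling the
  deviation |S / N - mu| into slices of width eps, each slice being controlled by the
  supermartingale with theta = +-4 k eps, yields E exp (l |S / N - mu|) <= 12 exp (2 l^2 eps^2)
  as soon as N >= 1 / eps^2, and convexity extends this to weighted combinations of arms.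
  Jointly with the history, the posterior sample has the law of the true mean (Bayes' rule), so
  both are exponentially concentrated around the empirical mean; the posterior mean inherits the
  bound by the conditional Jensen inequality.  Markov's inequality with l = r / (8 eps) and the
  triangle inequality through the empirical mean then bound both tails by 24 exp (- r^2 / 32).
*)

section \<open>Elementary exponential bounds\<close>

lemma bernoulli_hoeffding_le_1:
  fixes p \<theta> :: real
  assumes "0 \<le> p" "p \<le> 1"
  shows "(\<integral>\<^sup>+b. ennreal (exp (\<theta> * (of_bool b - p) - \<theta>\<^sup>2 / 8)) \<partial>bernoulli_pmf p) \<le> 1"
proof -
  have mgf: "(\<integral>\<^sup>+b. ennreal (exp (\<theta> * (of_bool b - p))) \<partial>bernoulli_pmf p) \<le> ennreal (exp (\<theta>\<^sup>2 / 8))"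
  proof -
    consider "\<theta> > 0" | "\<theta> < 0" | "\<theta> = 0" by linarith
    then show ?thesis
    proof cases
      case 1
      interpret interval_bounded_random_variable "bernoulli_pmf p" "\<lambda>b. of_bool b" 0 1
        by unfold_locales auto
      show ?thesis using Hoeffdings_lemma_nn_integral[OF 1] assms by simp
    next
      case 2
      interpret interval_bounded_random_variable "bernoulli_pmf p" "\<lambda>b. - of_bool b" "-1" 0
        by unfold_locales auto
      have "- \<theta> > 0" using 2 by simp
      from Hoeffdings_lemma_nn_integral[OF this] show ?thesis using assms
        by (simp add: algebra_simps)
    qed (simp add: measure_pmf.emeasure_space_1)
  qed
  have "(\<integral>\<^sup>+b. ennreal (exp (\<theta> * (of_bool b - p) - \<theta>\<^sup>2 / 8)) \<partial>bernoulli_pmf p)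
      = (\<integral>\<^sup>+b. ennreal (exp (\<theta> * (of_bool b - p))) * ennreal (exp (- (\<theta>\<^sup>2 / 8))) \<partial>bernoulli_pmf p)"
    by (simp only: diff_conv_add_uminus[of _ "\<theta>\<^sup>2 / 8"] exp_add ennreal_mult[OF exp_ge_zero exp_ge_zero])
  also have "\<dots> = (\<integral>\<^sup>+b. ennreal (exp (\<theta> * (of_bool b - p))) \<partial>bernoulli_pmf p) * ennreal (exp (- (\<theta>\<^sup>2 / 8)))"
    by (rule nn_integral_multc) simp
  also have "\<dots> \<le> ennreal (exp (\<theta>\<^sup>2 / 8)) * ennreal (exp (- (\<theta>\<^sup>2 / 8)))"
    by (intro mult_right_mono mgf) simp
  also have "\<dots> = 1"
    by (simp only: ennreal_mult[OF exp_ge_zero exp_ge_zero, symmetric] exp_add[symmetric]) simp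
  finally show ?thesis .
qed

lemma convex_on_exp_abs:
  fixes l :: real
  assumes "l \<ge> 0"
  shows "convex_on UNIV (\<lambda>x. exp (l * \<bar>x\<bar>))"
proof (rule convex_onI)
  fix t x y :: real assume t: "0 < t" "t < 1"
  have "l * \<bar>(1 - t) * x + t * y\<bar> \<le> (1 - t) * (l * \<bar>x\<bar>) + t * (l * \<bar>y\<bar>)"
  proof -
    have "\<bar>(1 - t) * x + t * y\<bar> \<le> (1 - t) * \<bar>x\<bar> + t * \<bar>y\<bar>"
      using abs_triangle_ineq[of "(1 - t) * x" "t * y"] t by (simp add: abs_mult)
    from mult_left_mono[OF this assms] show ?thesis by (simp add: algebra_simps)
  qed
  also have "exp \<dots> \<le> (1 - t) * exp (l * \<bar>x\<bar>) + t * exp (l * \<bar>y\<bar>)"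
    using convex_onD[OF exp_convex, of t "l * \<bar>x\<bar>" "l * \<bar>y\<bar>"] t by simp
  finally show "exp (l * \<bar>(1 - t) *\<^sub>R x + t *\<^sub>R y\<bar>) \<le> (1 - t) * exp (l * \<bar>x\<bar>) + t * exp (l * \<bar>y\<bar>)"
    by simp
qed auto

lemma exp_abs_convex_comb_le:
  fixes q x :: "'a \<Rightarrow> real" and l :: real
  assumes "l \<ge> 0" "finite I" "\<And>i. i \<in> I \<Longrightarrow> q i \<ge> 0" "(\<Sum>i\<in>I. q i) = 1"
  shows "exp (l * \<bar>\<Sum>i\<in>I. q i * x i\<bar>) \<le> (\<Sum>i\<in>I. q i * exp (l * \<bar>x i\<bar>))"
proof -
  have "I \<noteq> {}" using assms(4) by auto
  from convex_on_sum[OF assms(2) this convex_on_exp_abs[OF assms(1)] assms(4,3)]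
  show ?thesis by simp
qed

lemma abs_weighted_sum_le_1:
  fixes q x :: "nat \<Rightarrow> real"
  assumes "\<And>i. i < K \<Longrightarrow> q i \<ge> 0" "(\<Sum>i<K. q i) = 1" "\<And>i. i < K \<Longrightarrow> 0 \<le> x i \<and> x i \<le> 1"
  shows "\<bar>\<Sum>i<K. q i * x i\<bar> \<le> 1"
proof -
  have "0 \<le> (\<Sum>i<K. q i * x i)" using assms by (auto intro!: sum_nonneg)
  moreover have "(\<Sum>i<K. q i * x i) \<le> (\<Sum>i<K. q i * 1)"
    using assms by (intro sum_mono mult_left_mono) auto
  ultimately show ?thesis using assms(2) by simp
qed

lemma one_le_exp_tail_split:
  fixes l t x y z :: real
  assumes "l \<ge> 0" "t \<le> \<bar>x - y\<bar>"
  shows "1 \<le> exp (- (l * t / 2)) * (exp (l * \<bar>x - z\<bar>) + exp (l * \<bar>y - z\<bar>))"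
proof -
  have "t / 2 \<le> \<bar>x - z\<bar> \<or> t / 2 \<le> \<bar>y - z\<bar>" using assms(2) by linarith
  then have "l * (t / 2) \<le> l * \<bar>x - z\<bar> \<or> l * (t / 2) \<le> l * \<bar>y - z\<bar>"
    using mult_left_mono[OF _ assms(1)] by blast
  then have "exp (l * t / 2) \<le> exp (l * \<bar>x - z\<bar>) \<or> exp (l * t / 2) \<le> exp (l * \<bar>y - z\<bar>)"
    by simp
  then have "exp (l * t / 2) \<le> exp (l * \<bar>x - z\<bar>) + exp (l * \<bar>y - z\<bar>)"
    using exp_gt_zero[of "l * \<bar>x - z\<bar>"] exp_gt_zero[of "l * \<bar>y - z\<bar>"] by linarith
  then have "exp (- (l * t / 2)) * exp (l * t / 2)
      \<le> exp (- (l * t / 2)) * (exp (l * \<bar>x - z\<bar>) + exp (l * \<bar>y - z\<bar>))"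
    by (rule mult_left_mono) simp
  then show ?thesis by (simp flip: exp_add)
qed

definition hoeffding_exp :: "real \<Rightarrow> real \<Rightarrow> real \<Rightarrow> real" where
  "hoeffding_exp \<theta> n d = exp (\<theta> * d - \<theta>\<^sup>2 * n / 8)"

lemma hoeffding_exp_nonneg [simp]: "0 \<le> hoeffding_exp \<theta> n d"
  by (simp add: hoeffding_exp_def)

lemma exp_abs_le_hoeffding_exp_sym:
  "exp (\<bar>\<theta>\<bar> * \<bar>d\<bar> - \<theta>\<^sup>2 * n / 8) \<le> hoeffding_exp \<theta> n d + hoeffding_exp (- \<theta>) n d"
proof (cases "\<theta> * d \<ge> 0")
  case True
  then have "\<bar>\<theta>\<bar> * \<bar>d\<bar> = \<theta> * d" by (simp add: abs_mult[symmetric])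
  then show ?thesis by (simp add: hoeffding_exp_def add_increasing2)
next
  case False
  then have "\<bar>\<theta>\<bar> * \<bar>d\<bar> = - \<theta> * d" by (simp add: abs_mult[symmetric])
  then show ?thesis by (simp add: hoeffding_exp_def add_increasing)
qed

lemma exp_sq_le_hoeffding_exp_sym:
  fixes e n d :: real
  assumes "e > 0" "n * e\<^sup>2 \<ge> 1" "real k * e * n \<le> \<bar>d\<bar>"
  shows "exp (2 * (real k)\<^sup>2) \<le> hoeffding_exp (4 * real k * e) n d + hoeffding_exp (- (4 * real k * e)) n d"
proof -
  have "2 * (real k)\<^sup>2 \<le> 2 * (real k)\<^sup>2 * (n * e\<^sup>2)"
    using assms(2) by (simp add: mult_le_cancel_left1)
  also have "\<dots> \<le> \<bar>4 * real k * e\<bar> * \<bar>d\<bar> - (4 * real k * e)\<^sup>2 * n / 8"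
  proof -
    have "4 * (real k * e) * (real k * e * n) \<le> 4 * (real k * e) * \<bar>d\<bar>"
      using assms(1,3) by (intro mult_left_mono) auto
    then show ?thesis using assms(1) by (simp add: abs_mult power2_eq_square algebra_simps)
  qed
  finally show ?thesis
    using exp_abs_le_hoeffding_exp_sym[of "4 * real k * e" d n] by (smt (verit) exp_le_cancel_iff)
qed

(* Peeling: if k e <= |d / n| < (k + 1) e, the k-th summand alone dominates exp (l |d / n|),
   and the weights exp (l (k + 1) e - 2 k^2) sum to O(exp (2 l^2 e^2)). *)
definition peeling_sum :: "real \<Rightarrow> real \<Rightarrow> real \<Rightarrow> real \<Rightarrow> real" where
  "peeling_sum e l n d = (\<Sum>k\<le>nat \<lceil>1 / e\<rceil>. exp (l * (real k + 1) * e - 2 * (real k)\<^sup>2) *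
     (hoeffding_exp (4 * real k * e) n d + hoeffding_exp (- (4 * real k * e)) n d))"

lemma exp_abs_le_peeling_sum:
  fixes e l n d :: real
  assumes e: "e > 0" and l: "l \<ge> 0" and d: "\<bar>d\<bar> \<le> n" and n: "n * e\<^sup>2 \<ge> 1"
  shows "exp (l * \<bar>d / n\<bar>) \<le> peeling_sum e l n d"
proof -
  have n_pos: "n > 0"
    using n e by (smt (verit) mult_nonpos_nonneg zero_le_power2)
  define Y where "Y = \<bar>d / n\<bar>"
  have d_eq: "\<bar>d\<bar> = n * Y" using n_pos by (simp add: Y_def abs_divide)
  have Y_le_1: "Y \<le> 1" using d n_pos by (simp add: Y_def abs_divide)
  define k where "k = nat \<lfloor>Y / e\<rfloor>"
  have k_eq: "real k = of_int \<lfloor>Y / e\<rfloor>" using e by (simp add: k_def Y_def)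
  have k_lower: "real k * e \<le> Y"
    using e k_eq of_int_floor_le[of "Y / e"] by (simp add: le_divide_eq)
  have k_upper: "Y < (real k + 1) * e"
  proof -
    have "Y / e < real k + 1" using k_eq real_of_int_floor_add_one_gt[of "Y / e"] by linarith
    then show ?thesis using e by (simp add: divide_less_eq)
  qed
  have k_le: "k \<le> nat \<lceil>1 / e\<rceil>"
  proof -
    have "\<lfloor>Y / e\<rfloor> \<le> \<lfloor>1 / e\<rfloor>"
      using Y_le_1 e by (intro floor_mono divide_right_mono) auto
    also have "\<dots> \<le> \<lceil>1 / e\<rceil>" by (rule floor_le_ceiling)
    finally have "\<lfloor>Y / e\<rfloor> \<le> \<lceil>1 / e\<rceil>" .
    then show ?thesis by (simp add: k_def nat_mono)
  qed
  have "real k * e * n \<le> \<bar>d\<bar>"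
    using k_lower n_pos by (simp add: d_eq mult.commute)
  then have peak: "exp (2 * (real k)\<^sup>2) \<le> hoeffding_exp (4 * real k * e) n d + hoeffding_exp (- (4 * real k * e)) n d"
    by (rule exp_sq_le_hoeffding_exp_sym[OF e n])
  have "exp (l * Y) \<le> exp (l * (real k + 1) * e)"
    using k_upper l by (simp add: mult_left_mono mult.assoc)
  also have "\<dots> = exp (l * (real k + 1) * e - 2 * (real k)\<^sup>2) * exp (2 * (real k)\<^sup>2)"
    by (simp flip: exp_add)
  also have "\<dots> \<le> exp (l * (real k + 1) * e - 2 * (real k)\<^sup>2) *
      (hoeffding_exp (4 * real k * e) n d + hoeffding_exp (- (4 * real k * e)) n d)"
    by (intro mult_left_mono peak) simp
  also have "\<dots> \<le> peeling_sum e l n d"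
    unfolding peeling_sum_def using k_le
    by (intro member_le_sum[where f = "\<lambda>k. exp (l * (real k + 1) * e - 2 * (real k)\<^sup>2) *
        (hoeffding_exp (4 * real k * e) n d + hoeffding_exp (- (4 * real k * e)) n d)"])
       (auto simp: hoeffding_exp_def intro!: add_nonneg_nonneg)
  finally show ?thesis by (simp add: Y_def)
qed

lemma peeling_weights_sum_le:
  fixes l e :: real
  shows "(\<Sum>k\<le>M. exp (l * (real k + 1) * e - 2 * (real k)\<^sup>2)) \<le> 6 * exp (2 * l\<^sup>2 * e\<^sup>2)"
proof -
  have term_le: "exp (l * (real k + 1) * e - 2 * (real k)\<^sup>2) \<le> exp 1 * exp (2 * l\<^sup>2 * e\<^sup>2) * exp (-1) ^ k"
    for k :: nat
  proof -
    have "l * e \<le> l\<^sup>2 * e\<^sup>2 + 1"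
      using zero_le_power2[of "l * e - 1 / 2"] by (simp add: power2_eq_square algebra_simps)
    moreover have "l * real k * e \<le> l\<^sup>2 * e\<^sup>2 + (real k)\<^sup>2 / 4"
      using zero_le_power2[of "l * e - real k / 2"] by (simp add: power2_eq_square field_simps)
    moreover have "real k \<le> (real k)\<^sup>2" by (cases k) (auto simp: power2_eq_square)
    moreover have "l * (real k + 1) * e = l * real k * e + l * e" by (simp add: algebra_simps)
    ultimately have "l * (real k + 1) * e - 2 * (real k)\<^sup>2 \<le> 1 + 2 * l\<^sup>2 * e\<^sup>2 + - real k"
      by linarith
    then have "exp (l * (real k + 1) * e - 2 * (real k)\<^sup>2) \<le> exp (1 + 2 * l\<^sup>2 * e\<^sup>2 + - real k)"
      by simp
    also have "\<dots> = exp 1 * exp (2 * l\<^sup>2 * e\<^sup>2) * exp (-1) ^ k"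
      by (simp only: exp_add exp_of_nat_mult[symmetric] mult_minus1_right)
    finally show ?thesis .
  qed
  have geometric: "(\<Sum>k\<le>M. exp (-1::real) ^ k) \<le> 2"
  proof -
    have "exp (-1::real) \<le> 1 / 2"
      using exp_ge_add_one_self[of 1] by (simp add: exp_minus field_simps)
    then have "(\<Sum>k\<le>M. exp (-1::real) ^ k) \<le> (\<Sum>k\<le>M. (1 / 2 :: real) ^ k)"
      by (intro sum_mono power_mono) auto
    also have "\<dots> = 2 - 2 * (1 / 2) ^ Suc M"
      by (induction M) auto
    finally have "(\<Sum>k\<le>M. exp (-1::real) ^ k) \<le> 2 - 2 * (1 / 2) ^ Suc M" .
    moreover have "(0::real) \<le> 2 * (1 / 2) ^ Suc M" by simp
    ultimately show ?thesis by linarith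
  qed
  have "(\<Sum>k\<le>M. exp (l * (real k + 1) * e - 2 * (real k)\<^sup>2))
      \<le> exp 1 * exp (2 * l\<^sup>2 * e\<^sup>2) * (\<Sum>k\<le>M. exp (-1) ^ k)"
    unfolding sum_distrib_left by (intro sum_mono term_le)
  also have "\<dots> \<le> 3 * exp (2 * l\<^sup>2 * e\<^sup>2) * 2"
    using geometric exp_le by (intro mult_mono) (auto intro: sum_nonneg)
  finally show ?thesis by simp
qed

section \<open>Tail bounds from exponential moments\<close>

lemma nn_integral_sum_cmult_ennreal:
  assumes "finite I" "\<And>i. i \<in> I \<Longrightarrow> c i \<ge> 0" "\<And>i x. i \<in> I \<Longrightarrow> f i x \<ge> 0"
    and "\<And>i. i \<in> I \<Longrightarrow> (\<lambda>x. f i x) \<in> borel_measurable M"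
  shows "(\<integral>\<^sup>+x. ennreal (\<Sum>i\<in>I. c i * f i x) \<partial>M) = (\<Sum>i\<in>I. ennreal (c i) * (\<integral>\<^sup>+x. ennreal (f i x) \<partial>M))"
proof -
  have "ennreal (\<Sum>i\<in>I. c i * f i x) = (\<Sum>i\<in>I. ennreal (c i) * ennreal (f i x))" for x
    using assms(2,3) by (simp add: sum_ennreal[symmetric] ennreal_mult)
  then have "(\<integral>\<^sup>+x. ennreal (\<Sum>i\<in>I. c i * f i x) \<partial>M)
      = (\<Sum>i\<in>I. \<integral>\<^sup>+x. ennreal (c i) * ennreal (f i x) \<partial>M)"
    using assms(4) by (simp add: nn_integral_sum)
  also have "\<dots> = (\<Sum>i\<in>I. ennreal (c i) * (\<integral>\<^sup>+x. ennreal (f i x) \<partial>M))"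
    using assms(4) by (simp add: nn_integral_cmult)
  finally show ?thesis .
qed

lemma measurable_pair_count_space:
  fixes f :: "'a \<Rightarrow> 'b::countable \<Rightarrow> 'c"
  assumes "\<And>y. (\<lambda>x. f x y) \<in> measurable M N"
  shows "(\<lambda>\<omega>. f (fst \<omega>) (snd \<omega>)) \<in> measurable (M \<Otimes>\<^sub>M count_space UNIV) N"
  by (rule measurable_compose_countable'[where f = "\<lambda>y \<omega>. f (fst \<omega>) y" and g = snd and I = UNIV])
     (auto intro: measurable_compose[OF measurable_fst assms])

lemma measure_abs_diff_ge_le:
  fixes X Y Z :: "'a \<Rightarrow> real"
  assumes l: "l \<ge> 0" and B: "B \<ge> 0"
    and [measurable]: "X \<in> borel_measurable M" "Y \<in> borel_measurable M" "Z \<in> borel_measurable M"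
    and X_moment: "(\<integral>\<^sup>+\<omega>. ennreal (exp (l * \<bar>X \<omega> - Z \<omega>\<bar>)) \<partial>M) \<le> ennreal B"
    and Y_moment: "(\<integral>\<^sup>+\<omega>. ennreal (exp (l * \<bar>Y \<omega> - Z \<omega>\<bar>)) \<partial>M) \<le> ennreal B"
  shows "measure M {\<omega> \<in> space M. t \<le> \<bar>X \<omega> - Y \<omega>\<bar>} \<le> 2 * B * exp (- (l * t / 2))"
proof -
  let ?c = "exp (- (l * t / 2))"
  have "emeasure M {\<omega> \<in> space M. t \<le> \<bar>X \<omega> - Y \<omega>\<bar>} = (\<integral>\<^sup>+\<omega>. indicator {\<omega> \<in> space M. t \<le> \<bar>X \<omega> - Y \<omega>\<bar>} \<omega> \<partial>M)"
    by simp
  also have "\<dots> \<le> (\<integral>\<^sup>+\<omega>. ennreal ?c * (ennreal (exp (l * \<bar>X \<omega> - Z \<omega>\<bar>)) + ennreal (exp (l * \<bar>Y \<omega> - Z \<omega>\<bar>))) \<partial>M)"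
  proof (intro nn_integral_mono)
    fix \<omega>
    have "t \<le> \<bar>X \<omega> - Y \<omega>\<bar> \<Longrightarrow> 1 \<le> ?c * (exp (l * \<bar>X \<omega> - Z \<omega>\<bar>) + exp (l * \<bar>Y \<omega> - Z \<omega>\<bar>))"
      by (rule one_le_exp_tail_split[OF l])
    then show "indicator {\<omega> \<in> space M. t \<le> \<bar>X \<omega> - Y \<omega>\<bar>} \<omega>
        \<le> ennreal ?c * (ennreal (exp (l * \<bar>X \<omega> - Z \<omega>\<bar>)) + ennreal (exp (l * \<bar>Y \<omega> - Z \<omega>\<bar>)))"
      by (auto simp: indicator_def ennreal_mult[symmetric] ennreal_plus[symmetric] ennreal_leI
          simp del: ennreal_plus)
  qed
  also have "\<dots> = ennreal ?c * ((\<integral>\<^sup>+\<omega>. ennreal (exp (l * \<bar>X \<omega> - Z \<omega>\<bar>)) \<partial>M)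
                                + (\<integral>\<^sup>+\<omega>. ennreal (exp (l * \<bar>Y \<omega> - Z \<omega>\<bar>)) \<partial>M))"
    by (simp add: nn_integral_cmult nn_integral_add)
  also have "\<dots> \<le> ennreal ?c * (ennreal B + ennreal B)"
    by (intro mult_left_mono add_mono X_moment Y_moment) simp
  also have "\<dots> = ennreal (2 * B * ?c)"
    using B by (simp add: ennreal_mult[symmetric] ennreal_plus[symmetric] algebra_simps del: ennreal_plus)
  finally show ?thesis
    unfolding measure_def using B by (intro enn2real_leI) auto
qed

context sigma_finite_subalgebra
begin

lemma nn_integral_exp_abs_cond_exp_le:
  fixes X Z :: "'a \<Rightarrow> real"
  assumes l: "l \<ge> 0" and X: "integrable M X" and Z: "integrable M Z" "Z \<in> borel_measurable F"
    and G: "integrable M (\<lambda>\<omega>. exp (l * \<bar>X \<omega> - Z \<omega>\<bar>))"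
  shows "(\<integral>\<^sup>+\<omega>. ennreal (exp (l * \<bar>real_cond_exp M F X \<omega> - Z \<omega>\<bar>)) \<partial>M)
           \<le> (\<integral>\<^sup>+\<omega>. ennreal (exp (l * \<bar>X \<omega> - Z \<omega>\<bar>)) \<partial>M)"
proof -
  let ?G = "\<lambda>\<omega>. exp (l * \<bar>X \<omega> - Z \<omega>\<bar>)"
  have XZ: "integrable M (\<lambda>\<omega>. X \<omega> - Z \<omega>)" using X Z by auto
  have centre: "AE \<omega> in M. real_cond_exp M F (\<lambda>\<omega>. X \<omega> - Z \<omega>) \<omega> = real_cond_exp M F X \<omega> - Z \<omega>"
    using real_cond_exp_diff[OF X Z(1)] real_cond_exp_F_meas[OF Z] by eventually_elim simp
  have jensen: "AE \<omega> in M. exp (l * \<bar>real_cond_exp M F (\<lambda>\<omega>. X \<omega> - Z \<omega>) \<omega>\<bar>) \<le> real_cond_exp M F ?G \<omega>"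
  proof -
    have "(\<lambda>x::real. exp (l * \<bar>x\<bar>)) \<in> borel_measurable borel" by measurable
    then show ?thesis
      using real_cond_exp_jensens_inequality(2)[OF XZ _ _ _ convex_on_exp_abs[OF l]] G by simp
  qed
  have "AE \<omega> in M. exp (l * \<bar>real_cond_exp M F X \<omega> - Z \<omega>\<bar>) \<le> real_cond_exp M F ?G \<omega>"
    using centre jensen by eventually_elim simp
  then have "(\<integral>\<^sup>+\<omega>. ennreal (exp (l * \<bar>real_cond_exp M F X \<omega> - Z \<omega>\<bar>)) \<partial>M)
      \<le> (\<integral>\<^sup>+\<omega>. ennreal (real_cond_exp M F ?G \<omega>) \<partial>M)"
    by (intro nn_integral_mono_AE) (auto elim!: eventually_mono intro: ennreal_leI)
  also have "\<dots> = ennreal (\<integral>\<omega>. real_cond_exp M F ?G \<omega> \<partial>M)"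
    using borel_measurable_integrable[OF G]
    by (intro nn_integral_eq_integral real_cond_exp_int(1) G real_cond_exp_pos) auto
  also have "\<dots> = ennreal (\<integral>\<omega>. ?G \<omega> \<partial>M)"
    using G by (simp add: real_cond_exp_int(2))
  also have "\<dots> = (\<integral>\<^sup>+\<omega>. ennreal (?G \<omega>) \<partial>M)"
    by (rule nn_integral_eq_integral[symmetric, OF G]) simp
  finally show ?thesis .
qed

end

lemma (in finite_measure) integrable_exp_abs_diff_bounded:
  fixes X Z :: "'a \<Rightarrow> real"
  assumes "l \<ge> 0" "X \<in> borel_measurable M" "Z \<in> borel_measurable M"
    and "AE \<omega> in M. \<bar>X \<omega>\<bar> \<le> 1" "AE \<omega> in M. \<bar>Z \<omega>\<bar> \<le> 1"
  shows "integrable M (\<lambda>\<omega>. exp (l * \<bar>X \<omega> - Z \<omega>\<bar>))"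
proof (rule integrable_const_bound[where B = "exp (l * 2)"])
  show "AE \<omega> in M. norm (exp (l * \<bar>X \<omega> - Z \<omega>\<bar>)) \<le> exp (l * 2)"
    using assms(4,5)
  proof eventually_elim
    case (elim \<omega>)
    then have "\<bar>X \<omega> - Z \<omega>\<bar> \<le> 2" by linarith
    then show ?case using mult_left_mono[OF _ assms(1)] by simp
  qed
qed (use assms(2,3) in measurable)

section \<open>Concentration of empirical means along a history\<close>

definition num_successes :: "history \<Rightarrow> nat \<Rightarrow> nat" where
  "num_successes h i = length (filter (\<lambda>x. fst x = i \<and> snd x) h)"

definition centred_reward_sum :: "(nat \<Rightarrow> real) \<Rightarrow> history \<Rightarrow> nat \<Rightarrow> real" where
  "centred_reward_sum mu h i = real (num_successes h i) - mu i * real (num_samples h i)"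

lemma num_successes_le_num_samples: "num_successes h i \<le> num_samples h i"
  unfolding num_successes_def num_samples_def by (induction h) auto

lemma hoeffding_exp_snoc:
  "hoeffding_exp \<theta> (num_samples (h @ [(a, b)]) i) (centred_reward_sum mu (h @ [(a, b)]) i)
   = hoeffding_exp \<theta> (num_samples h i) (centred_reward_sum mu h i) *
     (if a = i then exp (\<theta> * (of_bool b - mu i) - \<theta>\<^sup>2 / 8) else 1)"
  by (auto simp: hoeffding_exp_def centred_reward_sum_def num_samples_def num_successes_def
      simp flip: exp_add intro!: arg_cong[where f = exp]) (auto simp: algebra_simps add_divide_distrib)

lemma nn_integral_hoeffding_exp_le_1:
  assumes "0 \<le> mu i" "mu i \<le> 1"
  shows "(\<integral>\<^sup>+h. ennreal (hoeffding_exp \<theta> (num_samples h i) (centred_reward_sum mu h i))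
           \<partial>hist_pmf pol mu n) \<le> 1"
proof (induction n)
  case 0
  then show ?case
    by (simp add: hoeffding_exp_def centred_reward_sum_def num_samples_def num_successes_def)
next
  case (Suc n)
  define G where "G h = ennreal (hoeffding_exp \<theta> (num_samples h i) (centred_reward_sum mu h i))" for h
  have step: "(\<integral>\<^sup>+b. G (h @ [(a, b)]) \<partial>bernoulli_pmf (mu a)) \<le> G h" for h a
  proof (cases "a = i")
    case True
    then have "G (h @ [(a, b)]) = G h * ennreal (exp (\<theta> * (of_bool b - mu i) - \<theta>\<^sup>2 / 8))" for b
      by (simp add: G_def hoeffding_exp_snoc ennreal_mult)
    then have "(\<integral>\<^sup>+b. G (h @ [(a, b)]) \<partial>bernoulli_pmf (mu a))
        = G h * (\<integral>\<^sup>+b. ennreal (exp (\<theta> * (of_bool b - mu i) - \<theta>\<^sup>2 / 8)) \<partial>bernoulli_pmf (mu i))"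
      using True by (simp add: nn_integral_cmult)
    also have "\<dots> \<le> G h * 1"
      by (intro mult_left_mono bernoulli_hoeffding_le_1 assms) simp
    finally show ?thesis by simp
  qed (simp add: G_def hoeffding_exp_snoc measure_pmf.emeasure_space_1)
  have "(\<integral>\<^sup>+h. G h \<partial>hist_pmf pol mu (Suc n))
      = (\<integral>\<^sup>+h. \<integral>\<^sup>+a. \<integral>\<^sup>+b. G (h @ [(a, b)]) \<partial>bernoulli_pmf (mu a) \<partial>pol h \<partial>hist_pmf pol mu n)"
    by simp
  also have "\<dots> \<le> (\<integral>\<^sup>+h. \<integral>\<^sup>+a. G h \<partial>pol h \<partial>hist_pmf pol mu n)"
    by (intro nn_integral_mono step)
  also have "\<dots> = (\<integral>\<^sup>+h. G h \<partial>hist_pmf pol mu n)"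
    by (simp add: measure_pmf.emeasure_space_1)
  also have "\<dots> \<le> 1"
    using Suc by (simp add: G_def)
  finally show ?case by (simp add: G_def)
qed

lemma nn_integral_peeling_sum_le:
  assumes "0 \<le> mu i" "mu i \<le> 1"
  shows "(\<integral>\<^sup>+h. ennreal (peeling_sum e l (num_samples h i) (centred_reward_sum mu h i)) \<partial>hist_pmf pol mu n)
           \<le> ennreal (12 * exp (2 * l\<^sup>2 * e\<^sup>2))"
proof -
  define H where "H \<theta> h = hoeffding_exp \<theta> (num_samples h i) (centred_reward_sum mu h i)" for \<theta> h
  define w where "w k = exp (l * (real k + 1) * e - 2 * (real k)\<^sup>2)" for k :: nat
  have "(\<integral>\<^sup>+h. ennreal (peeling_sum e l (num_samples h i) (centred_reward_sum mu h i)) \<partial>hist_pmf pol mu n)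
      = (\<Sum>k\<le>nat \<lceil>1 / e\<rceil>. ennreal (w k) *
           (\<integral>\<^sup>+h. ennreal (H (4 * real k * e) h + H (- (4 * real k * e)) h) \<partial>hist_pmf pol mu n))"
    unfolding peeling_sum_def H_def w_def
    by (rule nn_integral_sum_cmult_ennreal) (auto simp: hoeffding_exp_def intro: add_nonneg_nonneg)
  also have "\<dots> \<le> (\<Sum>k\<le>nat \<lceil>1 / e\<rceil>. ennreal (w k) * 2)"
  proof (intro sum_mono mult_left_mono)
    fix k
    have "(\<integral>\<^sup>+h. ennreal (H (4 * real k * e) h + H (- (4 * real k * e)) h) \<partial>hist_pmf pol mu n)
        = (\<integral>\<^sup>+h. ennreal (H (4 * real k * e) h) \<partial>hist_pmf pol mu n)
          + (\<integral>\<^sup>+h. ennreal (H (- (4 * real k * e)) h) \<partial>hist_pmf pol mu n)"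
      by (simp add: H_def hoeffding_exp_def ennreal_plus nn_integral_add)
    also have "\<dots> \<le> 1 + 1"
      unfolding H_def by (intro add_mono nn_integral_hoeffding_exp_le_1 assms)
    finally show "(\<integral>\<^sup>+h. ennreal (H (4 * real k * e) h + H (- (4 * real k * e)) h) \<partial>hist_pmf pol mu n) \<le> 2"
      by simp
  qed simp
  also have "\<dots> = ennreal (2 * (\<Sum>k\<le>nat \<lceil>1 / e\<rceil>. w k))"
    by (simp add: w_def sum_ennreal[symmetric] ennreal_mult sum_distrib_left mult.commute)
  also have "\<dots> \<le> ennreal (12 * exp (2 * l\<^sup>2 * e\<^sup>2))"
    using peeling_weights_sum_le[of l e "nat \<lceil>1 / e\<rceil>"] by (intro ennreal_leI) (simp add: w_def)
  finally show ?thesis .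
qed

definition emp_mean :: "history \<Rightarrow> nat \<Rightarrow> real" where
  "emp_mean h i = real (num_successes h i) / real (num_samples h i)"

lemma emp_mean_unit_interval: "0 \<le> emp_mean h i \<and> emp_mean h i \<le> 1"
  using num_successes_le_num_samples[of h i] by (auto simp: emp_mean_def divide_le_eq_1)

lemma exp_emp_mean_dev_le_peeling_sum:
  assumes "e > 0" "l \<ge> 0" "0 \<le> mu i" "mu i \<le> 1" "real (num_samples h i) \<ge> 1 / e\<^sup>2"
  shows "exp (l * \<bar>emp_mean h i - mu i\<bar>) \<le> peeling_sum e l (num_samples h i) (centred_reward_sum mu h i)"
proof -
  let ?N = "real (num_samples h i)" and ?S = "real (num_successes h i)"
  have enough: "?N * e\<^sup>2 \<ge> 1" using assms(1,5) by (simp add: field_simps)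
  then have "?N > 0" by (auto intro: ccontr)
  then have "emp_mean h i - mu i = centred_reward_sum mu h i / ?N"
    by (simp add: emp_mean_def centred_reward_sum_def field_simps)
  moreover have "\<bar>centred_reward_sum mu h i\<bar> \<le> ?N"
  proof -
    have "?S \<le> ?N" using num_successes_le_num_samples by simp
    moreover have "mu i * ?N \<le> ?N" using mult_right_mono[OF assms(4), of ?N] by simp
    moreover have "0 \<le> mu i * ?N" using assms(3) by simp
    ultimately show ?thesis unfolding centred_reward_sum_def abs_le_iff by linarith
  qed
  ultimately show ?thesis using exp_abs_le_peeling_sum[OF assms(1,2) _ enough] by simp
qed

definition well_sampled :: "nat \<Rightarrow> (nat \<Rightarrow> real) \<Rightarrow> real \<Rightarrow> history \<Rightarrow> bool" where
  "well_sampled K q e h \<longleftrightarrow> (\<forall>i<K. q i \<noteq> 0 \<longrightarrow> real (num_samples h i) \<ge> 1 / e\<^sup>2)"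

lemma peeling_sum_nonneg: "e > 0 \<Longrightarrow> peeling_sum e l n d \<ge> 0"
  unfolding peeling_sum_def by (intro sum_nonneg mult_nonneg_nonneg add_nonneg_nonneg) auto

lemma exp_weighted_dev_le_peeling_sum:
  assumes e: "e > 0" and l: "l \<ge> 0" and mu: "\<And>i. i < K \<Longrightarrow> 0 \<le> mu i \<and> mu i \<le> 1"
    and q: "\<And>i. i < K \<Longrightarrow> q i \<ge> 0" and q_sum: "(\<Sum>i<K. q i) = 1" and h: "well_sampled K q e h"
  shows "exp (l * \<bar>(\<Sum>i<K. q i * mu i) - (\<Sum>i<K. q i * emp_mean h i)\<bar>)
           \<le> (\<Sum>i<K. q i * peeling_sum e l (num_samples h i) (centred_reward_sum mu h i))"
proof -
  have "(\<Sum>i<K. q i * (emp_mean h i - mu i)) = (\<Sum>i<K. q i * emp_mean h i) - (\<Sum>i<K. q i * mu i)"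
    by (simp add: sum_subtractf right_diff_distrib)
  then have "\<bar>(\<Sum>i<K. q i * mu i) - (\<Sum>i<K. q i * emp_mean h i)\<bar> = \<bar>\<Sum>i<K. q i * (emp_mean h i - mu i)\<bar>"
    by (simp add: abs_minus_commute)
  then have "exp (l * \<bar>(\<Sum>i<K. q i * mu i) - (\<Sum>i<K. q i * emp_mean h i)\<bar>)
      \<le> (\<Sum>i<K. q i * exp (l * \<bar>emp_mean h i - mu i\<bar>))"
    using exp_abs_convex_comb_le[OF l _ _ q_sum] q by simp
  also have "\<dots> \<le> (\<Sum>i<K. q i * peeling_sum e l (num_samples h i) (centred_reward_sum mu h i))"
  proof (intro sum_mono)
    fix i assume "i \<in> {..<K}"
    with h mu[of i] q[of i] show "q i * exp (l * \<bar>emp_mean h i - mu i\<bar>)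
        \<le> q i * peeling_sum e l (num_samples h i) (centred_reward_sum mu h i)"
      unfolding well_sampled_def
      by (cases "q i = 0") (auto intro!: mult_left_mono exp_emp_mean_dev_le_peeling_sum e l)
  qed
  finally show ?thesis .
qed

lemma nn_integral_exp_weighted_dev_le:
  assumes e: "e > 0" and l: "l \<ge> 0" and mu: "\<And>i. i < K \<Longrightarrow> 0 \<le> mu i \<and> mu i \<le> 1"
    and q: "\<And>i. i < K \<Longrightarrow> q i \<ge> 0" and q_sum: "(\<Sum>i<K. q i) = 1"
  shows "(\<integral>\<^sup>+h. ennreal (if well_sampled K q e h
              then exp (l * \<bar>(\<Sum>i<K. q i * mu i) - (\<Sum>i<K. q i * emp_mean h i)\<bar>) else 0)
            \<partial>hist_pmf pol mu n) \<le> ennreal (12 * exp (2 * l\<^sup>2 * e\<^sup>2))"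
proof -
  define \<Phi> where "\<Phi> i h = peeling_sum e l (num_samples h i) (centred_reward_sum mu h i)" for i h
  have "(\<integral>\<^sup>+h. ennreal (if well_sampled K q e h
              then exp (l * \<bar>(\<Sum>i<K. q i * mu i) - (\<Sum>i<K. q i * emp_mean h i)\<bar>) else 0)
            \<partial>hist_pmf pol mu n) \<le> (\<integral>\<^sup>+h. ennreal (\<Sum>i<K. q i * \<Phi> i h) \<partial>hist_pmf pol mu n)"
    unfolding \<Phi>_def using exp_weighted_dev_le_peeling_sum[OF e l mu q q_sum] q peeling_sum_nonneg[OF e]
    by (intro nn_integral_mono ennreal_leI) (auto intro: sum_nonneg)
  also have "\<dots> = (\<Sum>i<K. ennreal (q i) * (\<integral>\<^sup>+h. ennreal (\<Phi> i h) \<partial>hist_pmf pol mu n))"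
    unfolding \<Phi>_def using q peeling_sum_nonneg[OF e] by (intro nn_integral_sum_cmult_ennreal) auto
  also have "\<dots> \<le> (\<Sum>i<K. ennreal (q i) * ennreal (12 * exp (2 * l\<^sup>2 * e\<^sup>2)))"
    unfolding \<Phi>_def using mu by (intro sum_mono mult_left_mono nn_integral_peeling_sum_le) auto
  also have "\<dots> = ennreal (12 * exp (2 * l\<^sup>2 * e\<^sup>2))"
    using q q_sum by (subst sum_distrib_right[symmetric], subst sum_ennreal) auto
  finally show ?thesis .
qed

section \<open>The Bayesian bandit model\<close>

lemma pmf_hist_pmf_snoc:
  "pmf (hist_pmf pol mu (Suc n)) (h @ [(a, b)])
     = pmf (hist_pmf pol mu n) h * pmf (pol h) a * pmf (bernoulli_pmf (mu a)) b"
proof -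
  have step: "pmf (bind_pmf (pol h') (\<lambda>a'. map_pmf (\<lambda>b'. h' @ [(a', b')]) (bernoulli_pmf (mu a'))))
        (h @ [(a, b)]) = indicator {h} h' * (pmf (pol h) a * pmf (bernoulli_pmf (mu a)) b)" for h'
  proof -
    have "pmf (map_pmf (\<lambda>b'. h' @ [(a', b')]) (bernoulli_pmf (mu a'))) (h @ [(a, b)])
        = indicator {h} h' * (indicator {a} a' * pmf (bernoulli_pmf (mu a)) b)" for a'
      by (auto simp: pmf_map vimage_def measure_pmf_single split: split_indicator)
    then show ?thesis
      by (simp add: pmf_bind measure_pmf_single split: split_indicator)
  qed
  show ?thesis
    by (simp only: hist_pmf.simps(2) pmf_bind[of "hist_pmf pol mu n"] step)
       (simp add: measure_pmf_single mult.assoc)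
qed

lemma pmf_hist_pmf_Suc_Nil: "pmf (hist_pmf pol mu (Suc n)) [] = 0"
  by (simp add: pmf_bind pmf_map vimage_def)

definition histories :: "nat \<Rightarrow> nat \<Rightarrow> history set" where
  "histories K n = {h. set h \<subseteq> {..<K} \<times> UNIV \<and> length h = n}"

lemma finite_histories: "finite (histories K n)"
  unfolding histories_def by (rule finite_lists_length_eq) auto

locale bandit_model =
  fixes K :: nat and P :: "nat \<Rightarrow> real measure" and pol :: "history \<Rightarrow> nat pmf"
  assumes prior_arm: "\<And>i. i < K \<Longrightarrow> prob_space (P i) \<and> sets (P i) = sets borel \<and> measure (P i) {0..1} = 1"
    and policy_arms: "\<And>h. set_pmf (pol h) \<subseteq> {..<K}"
begin

abbreviation likelihood :: "(nat \<Rightarrow> real) \<Rightarrow> nat \<Rightarrow> history \<Rightarrow> real" where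
  "likelihood mu n h \<equiv> pmf (hist_pmf pol mu n) h"

lemma set_pmf_hist_pmf: "set_pmf (hist_pmf pol mu n) \<subseteq> histories K n"
proof (induction n)
  case (Suc n)
  show ?case
  proof
    fix h assume "h \<in> set_pmf (hist_pmf pol mu (Suc n))"
    then obtain h' a b where "h' \<in> set_pmf (hist_pmf pol mu n)" "a \<in> set_pmf (pol h')" "h = h' @ [(a, b)]"
      by auto
    then show "h \<in> histories K (Suc n)"
      using Suc policy_arms[of h'] by (auto simp: histories_def)
  qed
qed (simp add: histories_def)

lemma likelihood_outside_histories: "h \<notin> histories K n \<Longrightarrow> likelihood mu n h = 0"
  using set_pmf_hist_pmf[of mu n] by (auto simp: set_pmf_iff)

lemma prob_space_prior: "prob_space (prior K P)"
  unfolding prior_def by (rule prob_space_PiM) (use prior_arm in auto)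

lemma measurable_prior_component: "a < K \<Longrightarrow> (\<lambda>mu. mu a) \<in> borel_measurable (prior K P)"
  using measurable_component_singleton[of a "{..<K}" P] prior_arm[of a]
  by (simp add: prior_def cong: measurable_cong_sets)

lemma AE_prior_unit_interval: "AE mu in prior K P. \<forall>i\<in>{..<K}. 0 \<le> mu i \<and> mu i \<le> 1"
proof (rule AE_finite_allI)
  fix i assume i: "i \<in> {..<K}"
  interpret prob_space "P i" using prior_arm i by auto
  have "AE x in P i. x \<in> {0..1}"
    by (rule AE_prob_1) (use prior_arm i in auto)
  then show "AE mu in prior K P. 0 \<le> mu i \<and> mu i \<le> 1"
    unfolding prior_def using AE_PiM_component[of "{..<K}" P i] prior_arm i by auto
qed simp

lemma measurable_likelihood: "(\<lambda>mu. likelihood mu n h) \<in> borel_measurable (prior K P)"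
proof (induction n arbitrary: h)
  case (Suc n)
  show ?case
  proof (cases h rule: rev_cases)
    case (snoc h' x)
    obtain a b where x: "x = (a, b)" by fastforce
    have likelihood_eq: "(\<lambda>mu. likelihood mu (Suc n) h)
        = (\<lambda>mu. likelihood mu n h' * pmf (pol h') a * pmf (bernoulli_pmf (mu a)) b)"
      by (simp only: snoc x pmf_hist_pmf_snoc)
    show ?thesis
    proof (cases "a < K")
      case True
      have "(\<lambda>mu. pmf (bernoulli_pmf (mu a)) b) \<in> borel_measurable (prior K P)"
        using measurable_prior_component[OF True] by (simp add: bernoulli_pmf.rep_eq)
      with Suc show ?thesis
        unfolding likelihood_eq by measurable
    next
      case False
      then have "pmf (pol h') a = 0" using policy_arms[of h'] by (auto simp: set_pmf_iff)
      then show ?thesis unfolding likelihood_eq by simp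
    qed
  qed (simp only: pmf_hist_pmf_Suc_Nil borel_measurable_const)
qed simp

lemma evidence_nonneg: "evidence K P pol n h \<ge> 0"
  unfolding evidence_def by (rule integral_nonneg_AE) auto

lemma nn_integral_likelihood: "(\<integral>\<^sup>+mu. ennreal (likelihood mu n h) \<partial>prior K P) = ennreal (evidence K P pol n h)"
proof -
  interpret prob_space "prior K P" by (rule prob_space_prior)
  have "integrable (prior K P) (\<lambda>mu. likelihood mu n h)"
    by (rule integrable_const_bound[where B = 1]) (auto simp: pmf_le_1 measurable_likelihood)
  then show ?thesis unfolding evidence_def by (rule nn_integral_eq_integral) auto
qed

(* Only an inequality: a history of evidence 0 gets posterior weight 0, as x / 0 = 0. *)
lemma nn_integral_posterior_weight_le_1:
  "(\<integral>\<^sup>+mu. ennreal (likelihood mu n h / evidence K P pol n h) \<partial>prior K P) \<le> 1"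
proof -
  let ?Z = "evidence K P pol n h"
  have "(\<integral>\<^sup>+mu. ennreal (likelihood mu n h / ?Z) \<partial>prior K P)
      = (\<integral>\<^sup>+mu. ennreal (likelihood mu n h) * ennreal (1 / ?Z) \<partial>prior K P)"
    by (simp add: ennreal_mult[symmetric] evidence_nonneg)
  also have "\<dots> = ennreal ?Z * ennreal (1 / ?Z)"
    by (simp add: nn_integral_multc measurable_likelihood nn_integral_likelihood)
  also have "\<dots> = ennreal (?Z * (1 / ?Z))"
    by (rule ennreal_mult[symmetric]) (simp_all add: evidence_nonneg)
  also have "\<dots> \<le> 1"
    using ennreal_leI[of "?Z * (1 / ?Z)" 1] by (cases "?Z = 0") simp_all
  finally show ?thesis .
qed

lemma measurable_likelihood_pair:
  "(\<lambda>(mu, h). ennreal (likelihood mu n h)) \<in> borel_measurable (prior K P \<Otimes>\<^sub>M count_space UNIV)"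
  using measurable_pair_count_space[where f = "\<lambda>mu h. ennreal (likelihood mu n h)"] measurable_likelihood
  by (simp add: case_prod_beta')

lemma nn_integral_bandit_joint:
  assumes g: "g \<in> borel_measurable (prior K P \<Otimes>\<^sub>M count_space UNIV)"
  shows "(\<integral>\<^sup>+\<omega>. g \<omega> \<partial>bandit_joint K P pol n) = (\<integral>\<^sup>+mu. \<integral>\<^sup>+h. g (mu, h) \<partial>hist_pmf pol mu n \<partial>prior K P)"
proof -
  interpret C: sigma_finite_measure "count_space (UNIV :: history set)"
    by (rule sigma_finite_measure_count_space)
  note [measurable] = g measurable_likelihood_pair
  have "(\<integral>\<^sup>+\<omega>. g \<omega> \<partial>bandit_joint K P pol n)
      = (\<integral>\<^sup>+\<omega>. (\<lambda>(mu, h). ennreal (likelihood mu n h)) \<omega> * g \<omega> \<partial>(prior K P \<Otimes>\<^sub>M count_space UNIV))"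
    unfolding bandit_joint_def by (rule nn_integral_density) measurable
  also have "\<dots> = (\<integral>\<^sup>+mu. \<integral>\<^sup>+h. ennreal (likelihood mu n h) * g (mu, h) \<partial>count_space UNIV \<partial>prior K P)"
    by (rule C.nn_integral_fst[symmetric, where f = "\<lambda>\<omega>. (\<lambda>(mu, h). ennreal (likelihood mu n h)) \<omega> * g \<omega>",
          simplified]) measurable
  finally show ?thesis by (simp add: nn_integral_measure_pmf)
qed

lemma prob_space_bandit_joint: "prob_space (bandit_joint K P pol n)"
proof (rule prob_spaceI)
  interpret prob_space "prior K P" by (rule prob_space_prior)
  have "emeasure (bandit_joint K P pol n) (space (bandit_joint K P pol n)) = (\<integral>\<^sup>+\<omega>. 1 \<partial>bandit_joint K P pol n)"
    by simp
  also have "\<dots> = 1"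
    by (subst nn_integral_bandit_joint) (simp_all add: emeasure_space_1)
  finally show "emeasure (bandit_joint K P pol n) (space (bandit_joint K P pol n)) = 1" .
qed

lemma AE_bandit_joint_fst:
  assumes [measurable]: "Measurable.pred (prior K P) Q" and "AE mu in prior K P. Q mu"
  shows "AE \<omega> in bandit_joint K P pol n. Q (fst \<omega>)"
proof -
  have "(\<integral>\<^sup>+\<omega>. indicator {\<omega>. \<not> Q (fst \<omega>)} \<omega> \<partial>bandit_joint K P pol n)
       = (\<integral>\<^sup>+mu. \<integral>\<^sup>+h. indicator {\<omega>. \<not> Q (fst \<omega>)} (mu, h) \<partial>hist_pmf pol mu n \<partial>prior K P)"
    by (rule nn_integral_bandit_joint) measurable
  also have "\<dots> = 0"
    using assms(2) by (subst nn_integral_0_iff_AE) (auto simp: indicator_def elim!: eventually_mono)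
  finally show ?thesis
    by (subst AE_iff_nn_integral) (auto simp: bandit_joint_def)
qed

lemma AE_bandit_joint_unit_interval:
  "AE \<omega> in bandit_joint K P pol n. \<forall>i\<in>{..<K}. 0 \<le> fst \<omega> i \<and> fst \<omega> i \<le> 1"
proof (rule AE_bandit_joint_fst[OF _ AE_prior_unit_interval])
  show "Measurable.pred (prior K P) (\<lambda>mu. \<forall>i\<in>{..<K}. 0 \<le> mu i \<and> mu i \<le> 1)"
  proof (rule pred_intros_finite(3))
    fix i assume "i \<in> {..<K}"
    then have [measurable]: "(\<lambda>mu. mu i) \<in> borel_measurable (prior K P)"
      by (intro measurable_prior_component) simp
    show "Measurable.pred (prior K P) (\<lambda>mu. 0 \<le> mu i \<and> mu i \<le> 1)" by measurable
  qed simp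
qed

definition post_model_density :: "nat \<Rightarrow> (nat \<Rightarrow> real) \<Rightarrow> history \<Rightarrow> (nat \<Rightarrow> real) \<Rightarrow> real" where
  "post_model_density n mu h nu = likelihood mu n h * likelihood nu n h / evidence K P pol n h"

lemma post_model_density_commute: "post_model_density n mu h nu = post_model_density n nu h mu"
  by (simp add: post_model_density_def mult.commute)

lemma ennreal_post_model_density:
  "ennreal (post_model_density n mu h nu)
     = ennreal (likelihood mu n h / evidence K P pol n h) * ennreal (likelihood nu n h)"
proof -
  have factor: "post_model_density n mu h nu = likelihood mu n h / evidence K P pol n h * likelihood nu n h"
    by (simp add: post_model_density_def)
  show ?thesis
    unfolding factor by (rule ennreal_mult) (simp_all add: evidence_nonneg)
qed

lemma measurable_post_model_density:
  "(\<lambda>(mu, h, nu). ennreal (post_model_density n mu h nu))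
     \<in> borel_measurable (prior K P \<Otimes>\<^sub>M (count_space UNIV \<Otimes>\<^sub>M prior K P))"
proof -
  have "(\<lambda>\<omega>. ennreal (post_model_density n (fst \<omega>) h (snd (snd \<omega>))))
      \<in> borel_measurable (prior K P \<Otimes>\<^sub>M (count_space UNIV \<Otimes>\<^sub>M prior K P))" for h
    using measurable_likelihood[of n h] unfolding post_model_density_def by measurable
  then show ?thesis
    by (subst case_prod_beta', subst case_prod_beta')
       (rule measurable_compose_countable'[where g = "\<lambda>\<omega>. fst (snd \<omega>)" and I = UNIV], auto)
qed

lemma nn_integral_bandit_post_model:
  assumes g: "g \<in> borel_measurable (prior K P \<Otimes>\<^sub>M (count_space UNIV \<Otimes>\<^sub>M prior K P))"
  shows "(\<integral>\<^sup>+\<omega>. g \<omega> \<partial>bandit_post_model K P pol n) =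
    (\<integral>\<^sup>+mu. \<integral>\<^sup>+h. \<integral>\<^sup>+nu. ennreal (post_model_density n mu h nu) * g (mu, h, nu)
        \<partial>prior K P \<partial>count_space UNIV \<partial>prior K P)"
proof -
  interpret C: sigma_finite_measure "count_space (UNIV :: history set)"
    by (rule sigma_finite_measure_count_space)
  interpret Pr: prob_space "prior K P" by (rule prob_space_prior)
  interpret CP: sigma_finite_measure "count_space (UNIV :: history set) \<Otimes>\<^sub>M prior K P"
    by (rule sigma_finite_pair_measure) unfold_locales
  define w where "w = (\<lambda>(mu, h, nu). ennreal (post_model_density n mu h nu))"
  note [measurable] = g measurable_post_model_density[of n, folded w_def]
  have "(\<integral>\<^sup>+\<omega>. g \<omega> \<partial>bandit_post_model K P pol n)
      = (\<integral>\<^sup>+\<omega>. w \<omega> * g \<omega> \<partial>(prior K P \<Otimes>\<^sub>M (count_space UNIV \<Otimes>\<^sub>M prior K P)))"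
    unfolding bandit_post_model_def
    by (simp only: post_model_density_def[symmetric] w_def[symmetric]) (rule nn_integral_density; measurable)
  also have "\<dots> = (\<integral>\<^sup>+mu. \<integral>\<^sup>+y. w (mu, y) * g (mu, y) \<partial>(count_space UNIV \<Otimes>\<^sub>M prior K P) \<partial>prior K P)"
    by (rule CP.nn_integral_fst[symmetric, where f = "\<lambda>\<omega>. w \<omega> * g \<omega>", simplified]) measurable
  also have "\<dots> = (\<integral>\<^sup>+mu. \<integral>\<^sup>+h. \<integral>\<^sup>+nu. w (mu, h, nu) * g (mu, h, nu) \<partial>prior K P \<partial>count_space UNIV \<partial>prior K P)"
  proof (rule nn_integral_cong)
    fix mu assume mu: "mu \<in> space (prior K P)"
    have "(\<lambda>y. w (mu, y) * g (mu, y)) \<in> borel_measurable (count_space UNIV \<Otimes>\<^sub>M prior K P)"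
      using measurable_Pair1'[OF mu, of "count_space UNIV \<Otimes>\<^sub>M prior K P"] by measurable
    from Pr.nn_integral_fst[OF this] show
      "(\<integral>\<^sup>+y. w (mu, y) * g (mu, y) \<partial>(count_space UNIV \<Otimes>\<^sub>M prior K P))
        = (\<integral>\<^sup>+h. \<integral>\<^sup>+nu. w (mu, h, nu) * g (mu, h, nu) \<partial>prior K P \<partial>count_space UNIV)"
      by simp
  qed
  finally show ?thesis by (simp add: w_def)
qed

lemma nn_integral_hist_pmf_histories:
  "(\<integral>\<^sup>+h. f h \<partial>hist_pmf pol mu n) = (\<Sum>h\<in>histories K n. ennreal (likelihood mu n h) * f h)"
  unfolding nn_integral_measure_pmf
  by (rule nn_integral_count_space') (auto simp: finite_histories likelihood_outside_histories)

lemma nn_integral_post_model_true_le_joint: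
  assumes g[measurable]: "g \<in> borel_measurable (prior K P \<Otimes>\<^sub>M count_space UNIV)"
  shows "(\<integral>\<^sup>+\<omega>. g (fst \<omega>, fst (snd \<omega>)) \<partial>bandit_post_model K P pol n) \<le> (\<integral>\<^sup>+\<omega>. g \<omega> \<partial>bandit_joint K P pol n)"
proof -
  note [measurable] = measurable_likelihood
  have "(\<integral>\<^sup>+\<omega>. g (fst \<omega>, fst (snd \<omega>)) \<partial>bandit_post_model K P pol n)
      = (\<integral>\<^sup>+mu. \<integral>\<^sup>+h. \<integral>\<^sup>+nu. ennreal (post_model_density n mu h nu) * g (mu, h)
          \<partial>prior K P \<partial>count_space UNIV \<partial>prior K P)"
    by (subst nn_integral_bandit_post_model) (auto simp: measurable_compose[OF _ g])
  also have "\<dots> \<le> (\<integral>\<^sup>+mu. \<integral>\<^sup>+h. ennreal (likelihood mu n h) * g (mu, h) \<partial>count_space UNIV \<partial>prior K P)"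
  proof (intro nn_integral_mono)
    fix mu h
    have "ennreal (post_model_density n mu h nu) * g (mu, h)
        = ennreal (likelihood nu n h / evidence K P pol n h) * (ennreal (likelihood mu n h) * g (mu, h))" for nu
      by (simp only: post_model_density_commute[of n mu] ennreal_post_model_density mult.assoc)
    then have "(\<integral>\<^sup>+nu. ennreal (post_model_density n mu h nu) * g (mu, h) \<partial>prior K P)
        = (\<integral>\<^sup>+nu. ennreal (likelihood nu n h / evidence K P pol n h) \<partial>prior K P)
            * (ennreal (likelihood mu n h) * g (mu, h))"
      by (simp only:) (rule nn_integral_multc, measurable)
    also have "\<dots> \<le> 1 * (ennreal (likelihood mu n h) * g (mu, h))"
      by (intro mult_right_mono nn_integral_posterior_weight_le_1) simp
    finally show "(\<integral>\<^sup>+nu. ennreal (post_model_density n mu h nu) * g (mu, h) \<partial>prior K P)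
        \<le> ennreal (likelihood mu n h) * g (mu, h)" by simp
  qed
  also have "\<dots> = (\<integral>\<^sup>+\<omega>. g \<omega> \<partial>bandit_joint K P pol n)"
    by (simp add: nn_integral_bandit_joint[OF g] nn_integral_measure_pmf)
  finally show ?thesis .
qed

lemma nn_integral_post_model_sample_le_joint:
  assumes g[measurable]: "g \<in> borel_measurable (prior K P \<Otimes>\<^sub>M count_space UNIV)"
  shows "(\<integral>\<^sup>+\<omega>. g (snd (snd \<omega>), fst (snd \<omega>)) \<partial>bandit_post_model K P pol n) \<le> (\<integral>\<^sup>+\<omega>. g \<omega> \<partial>bandit_joint K P pol n)"
proof -
  define A where "A h = (\<integral>\<^sup>+nu. ennreal (likelihood nu n h) * g (nu, h) \<partial>prior K P)" for h
  have g_slice[measurable]: "(\<lambda>nu. g (nu, h)) \<in> borel_measurable (prior K P)" for h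
    using measurable_Pair2'[of h "count_space UNIV" "prior K P"] by measurable
  note [measurable] = measurable_likelihood
  have "(\<integral>\<^sup>+\<omega>. g (snd (snd \<omega>), fst (snd \<omega>)) \<partial>bandit_post_model K P pol n)
      = (\<integral>\<^sup>+mu. \<integral>\<^sup>+h. \<integral>\<^sup>+nu. ennreal (post_model_density n mu h nu) * g (nu, h)
          \<partial>prior K P \<partial>count_space UNIV \<partial>prior K P)"
    by (subst nn_integral_bandit_post_model) (auto simp: measurable_compose[OF _ g])
  also have "\<dots> = (\<integral>\<^sup>+mu. \<integral>\<^sup>+h. ennreal (likelihood mu n h / evidence K P pol n h) * A h
      \<partial>count_space UNIV \<partial>prior K P)"
  proof (intro nn_integral_cong)
    fix mu h
    have "ennreal (post_model_density n mu h nu) * g (nu, h)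
        = ennreal (likelihood mu n h / evidence K P pol n h) * (ennreal (likelihood nu n h) * g (nu, h))" for nu
      by (simp only: ennreal_post_model_density mult.assoc)
    then show "(\<integral>\<^sup>+nu. ennreal (post_model_density n mu h nu) * g (nu, h) \<partial>prior K P)
        = ennreal (likelihood mu n h / evidence K P pol n h) * A h"
      by (simp add: A_def nn_integral_cmult)
  qed
  also have "\<dots> = (\<integral>\<^sup>+mu. (\<Sum>h\<in>histories K n. ennreal (likelihood mu n h / evidence K P pol n h) * A h) \<partial>prior K P)"
    by (intro nn_integral_cong nn_integral_count_space')
       (auto simp: finite_histories likelihood_outside_histories)
  also have "\<dots> = (\<Sum>h\<in>histories K n. (\<integral>\<^sup>+mu. ennreal (likelihood mu n h / evidence K P pol n h) \<partial>prior K P) * A h)"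
    by (simp add: nn_integral_sum nn_integral_multc)
  also have "\<dots> \<le> (\<Sum>h\<in>histories K n. 1 * A h)"
    by (intro sum_mono mult_right_mono nn_integral_posterior_weight_le_1) simp
  also have "\<dots> = (\<integral>\<^sup>+nu. (\<Sum>h\<in>histories K n. ennreal (likelihood nu n h) * g (nu, h)) \<partial>prior K P)"
    by (simp add: A_def nn_integral_sum)
  also have "\<dots> = (\<integral>\<^sup>+\<omega>. g \<omega> \<partial>bandit_joint K P pol n)"
    by (simp add: nn_integral_bandit_joint[OF g] nn_integral_hist_pmf_histories)
  finally show ?thesis .
qed

lemma measurable_prior_weighted_sum:
  "(\<lambda>mu. \<Sum>i<K. q i * mu i) \<in> borel_measurable (prior K P)"
  by (intro borel_measurable_sum borel_measurable_times borel_measurable_const measurable_prior_component) auto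

lemma AE_well_sampled:
  assumes "\<forall>i<K. q i \<noteq> 0 \<longrightarrow> (AE \<omega> in bandit_joint K P pol n. real (num_samples (snd \<omega>) i) \<ge> 1 / e\<^sup>2)"
  shows "AE \<omega> in bandit_joint K P pol n. well_sampled K q e (snd \<omega>)"
proof -
  have "AE \<omega> in bandit_joint K P pol n. \<forall>i\<in>{..<K}. q i \<noteq> 0 \<longrightarrow> real (num_samples (snd \<omega>) i) \<ge> 1 / e\<^sup>2"
    using assms by (intro AE_finite_allI) (auto simp del: AE_conj_iff)
  then show ?thesis by (auto simp: well_sampled_def elim!: eventually_mono)
qed

lemma nn_integral_joint_exp_weighted_dev_le:
  assumes e: "e > 0" and l: "l \<ge> 0" and q: "\<And>i. i < K \<Longrightarrow> q i \<ge> 0" and q_sum: "(\<Sum>i<K. q i) = 1"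
    and samples: "\<forall>i<K. q i \<noteq> 0 \<longrightarrow> (AE \<omega> in bandit_joint K P pol n. real (num_samples (snd \<omega>) i) \<ge> 1 / e\<^sup>2)"
  shows "(\<integral>\<^sup>+\<omega>. ennreal (exp (l * \<bar>(\<Sum>i<K. q i * fst \<omega> i) - (\<Sum>i<K. q i * emp_mean (snd \<omega>) i)\<bar>))
            \<partial>bandit_joint K P pol n) \<le> ennreal (12 * exp (2 * l\<^sup>2 * e\<^sup>2))"
proof -
  interpret prob_space "prior K P" by (rule prob_space_prior)
  define f where "f mu h = ennreal (if well_sampled K q e h
      then exp (l * \<bar>(\<Sum>i<K. q i * mu i) - (\<Sum>i<K. q i * emp_mean h i)\<bar>) else 0)" for mu h
  have "(\<lambda>mu. f mu h) \<in> borel_measurable (prior K P)" for h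
    using measurable_prior_weighted_sum[of q] unfolding f_def by measurable
  then have f_measurable: "(\<lambda>\<omega>. f (fst \<omega>) (snd \<omega>)) \<in> borel_measurable (prior K P \<Otimes>\<^sub>M count_space UNIV)"
    by (rule measurable_pair_count_space)
  have "(\<integral>\<^sup>+\<omega>. ennreal (exp (l * \<bar>(\<Sum>i<K. q i * fst \<omega> i) - (\<Sum>i<K. q i * emp_mean (snd \<omega>) i)\<bar>))
            \<partial>bandit_joint K P pol n) = (\<integral>\<^sup>+\<omega>. f (fst \<omega>) (snd \<omega>) \<partial>bandit_joint K P pol n)"
    using AE_well_sampled[OF samples] by (intro nn_integral_cong_AE) (auto simp: f_def elim!: eventually_mono)
  also have "\<dots> = (\<integral>\<^sup>+mu. \<integral>\<^sup>+h. f mu h \<partial>hist_pmf pol mu n \<partial>prior K P)"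
    using nn_integral_bandit_joint[OF f_measurable] by simp
  also have "\<dots> \<le> (\<integral>\<^sup>+mu. ennreal (12 * exp (2 * l\<^sup>2 * e\<^sup>2)) \<partial>prior K P)"
    using AE_prior_unit_interval
    by (intro nn_integral_mono_AE)
       (auto elim!: eventually_mono simp: f_def intro!: nn_integral_exp_weighted_dev_le[OF e l _ q q_sum])
  also have "\<dots> = ennreal (12 * exp (2 * l\<^sup>2 * e\<^sup>2))"
    by (simp add: emeasure_space_1)
  finally show ?thesis .
qed

lemma measure_post_model_weighted_dev_ge_le:
  assumes e: "e > 0" and l: "l \<ge> 0" and q: "\<And>i. i < K \<Longrightarrow> q i \<ge> 0" and q_sum: "(\<Sum>i<K. q i) = 1"
    and samples: "\<forall>i<K. q i \<noteq> 0 \<longrightarrow> (AE \<omega> in bandit_joint K P pol n. real (num_samples (snd \<omega>) i) \<ge> 1 / e\<^sup>2)"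
  shows "measure (bandit_post_model K P pol n)
           {\<omega> \<in> space (bandit_post_model K P pol n).
              t \<le> \<bar>(\<Sum>i<K. q i * snd (snd \<omega>) i) - (\<Sum>i<K. q i * fst \<omega> i)\<bar>}
         \<le> 2 * (12 * exp (2 * l\<^sup>2 * e\<^sup>2)) * exp (- (l * t / 2))"
proof -
  define G where "G \<omega> = ennreal (exp (l * \<bar>(\<Sum>i<K. q i * fst \<omega> i) - (\<Sum>i<K. q i * emp_mean (snd \<omega>) i)\<bar>))"
    for \<omega> :: "(nat \<Rightarrow> real) \<times> history"
  note [measurable] = measurable_prior_weighted_sum[of q]
  have "(\<lambda>mu. G (mu, h)) \<in> borel_measurable (prior K P)" for h
  proof -
    have "(\<lambda>mu. ennreal (exp (l * \<bar>(\<Sum>i<K. q i * mu i) - (\<Sum>i<K. q i * emp_mean h i)\<bar>)))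
        \<in> borel_measurable (prior K P)" by measurable
    then show ?thesis by (simp add: G_def)
  qed
  then have "(\<lambda>\<omega>. G (fst \<omega>, snd \<omega>)) \<in> borel_measurable (prior K P \<Otimes>\<^sub>M count_space UNIV)"
    by (rule measurable_pair_count_space[where f = "\<lambda>mu h. G (mu, h)"])
  then have [measurable]: "G \<in> borel_measurable (prior K P \<Otimes>\<^sub>M count_space UNIV)" by simp
  have joint_moment: "(\<integral>\<^sup>+\<omega>. G \<omega> \<partial>bandit_joint K P pol n) \<le> ennreal (12 * exp (2 * l\<^sup>2 * e\<^sup>2))"
    unfolding G_def by (rule nn_integral_joint_exp_weighted_dev_le[OF e l q q_sum samples])
  show ?thesis
  proof (rule measure_abs_diff_ge_le[OF l, where Z = "\<lambda>\<omega>. \<Sum>i<K. q i * emp_mean (fst (snd \<omega>)) i"])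
    show "(\<integral>\<^sup>+\<omega>. ennreal (exp (l * \<bar>(\<Sum>i<K. q i * snd (snd \<omega>) i) - (\<Sum>i<K. q i * emp_mean (fst (snd \<omega>)) i)\<bar>))
        \<partial>bandit_post_model K P pol n) \<le> ennreal (12 * exp (2 * l\<^sup>2 * e\<^sup>2))"
      using nn_integral_post_model_sample_le_joint[of G n] joint_moment by (simp add: G_def)
    show "(\<integral>\<^sup>+\<omega>. ennreal (exp (l * \<bar>(\<Sum>i<K. q i * fst \<omega> i) - (\<Sum>i<K. q i * emp_mean (fst (snd \<omega>)) i)\<bar>))
        \<partial>bandit_post_model K P pol n) \<le> ennreal (12 * exp (2 * l\<^sup>2 * e\<^sup>2))"
      using nn_integral_post_model_true_le_joint[of G n] joint_moment by (simp add: G_def)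
  qed (simp_all add: bandit_post_model_def)
qed

lemma measurable_hist_algebra_snd: "snd \<in> measurable (hist_algebra K P pol n) (count_space UNIV)"
  unfolding hist_algebra_def by (rule measurable_vimage_algebra1) auto

lemma finite_measure_subalgebra_hist_algebra:
  "finite_measure_subalgebra (bandit_joint K P pol n) (hist_algebra K P pol n)"
proof -
  interpret prob_space "bandit_joint K P pol n" by (rule prob_space_bandit_joint)
  have "snd \<in> measurable (bandit_joint K P pol n) (count_space UNIV)"
    unfolding bandit_joint_def by measurable
  then have "subalgebra (bandit_joint K P pol n) (hist_algebra K P pol n)"
    unfolding subalgebra_def hist_algebra_def by (simp add: measurable_iff_sets)
  then show ?thesis
    by (simp add: finite_measure_subalgebra_def finite_measure_subalgebra_axioms_def finite_measure_axioms)
qed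

lemma measure_cond_exp_weighted_dev_ge_le:
  assumes e: "e > 0" and l: "l \<ge> 0" and q: "\<And>i. i < K \<Longrightarrow> q i \<ge> 0" and q_sum: "(\<Sum>i<K. q i) = 1"
    and samples: "\<forall>i<K. q i \<noteq> 0 \<longrightarrow> (AE \<omega> in bandit_joint K P pol n. real (num_samples (snd \<omega>) i) \<ge> 1 / e\<^sup>2)"
  shows "measure (bandit_joint K P pol n)
           {\<omega> \<in> space (bandit_joint K P pol n).
              t \<le> \<bar>real_cond_exp (bandit_joint K P pol n) (hist_algebra K P pol n) (\<lambda>\<omega>. \<Sum>i<K. q i * fst \<omega> i) \<omega>
                   - (\<Sum>i<K. q i * fst \<omega> i)\<bar>}
         \<le> 2 * (12 * exp (2 * l\<^sup>2 * e\<^sup>2)) * exp (- (l * t / 2))"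
proof -
  let ?M = "bandit_joint K P pol n" and ?F = "hist_algebra K P pol n"
  interpret prob_space ?M by (rule prob_space_bandit_joint)
  interpret finite_measure_subalgebra ?M ?F by (rule finite_measure_subalgebra_hist_algebra)
  define X where "X \<omega> = (\<Sum>i<K. q i * fst \<omega> i)" for \<omega> :: "(nat \<Rightarrow> real) \<times> history"
  define Z where "Z \<omega> = (\<Sum>i<K. q i * emp_mean (snd \<omega>) i)" for \<omega> :: "(nat \<Rightarrow> real) \<times> history"
  note [measurable] = measurable_prior_weighted_sum[of q]
  have X_measurable[measurable]: "X \<in> borel_measurable ?M"
    unfolding X_def bandit_joint_def by measurable
  have Z_measurable_F: "Z \<in> borel_measurable ?F"
    unfolding Z_def using measurable_hist_algebra_snd[of n] by measurable
  have Z_measurable[measurable]: "Z \<in> borel_measurable ?M"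
    unfolding Z_def bandit_joint_def by measurable
  have X_bounded: "AE \<omega> in ?M. \<bar>X \<omega>\<bar> \<le> 1"
    using AE_bandit_joint_unit_interval unfolding X_def
    by eventually_elim (rule abs_weighted_sum_le_1[OF q q_sum], auto)
  have Z_bounded: "\<bar>Z \<omega>\<bar> \<le> 1" for \<omega>
    unfolding Z_def using emp_mean_unit_interval by (intro abs_weighted_sum_le_1[OF q q_sum])
  have X_integrable: "integrable ?M X"
    using X_bounded by (intro integrable_const_bound[where B = 1]) auto
  have Z_integrable: "integrable ?M Z"
    using Z_bounded by (intro integrable_const_bound[where B = 1]) auto
  have G_integrable: "integrable ?M (\<lambda>\<omega>. exp (l * \<bar>X \<omega> - Z \<omega>\<bar>))"
    using l X_bounded Z_bounded by (intro integrable_exp_abs_diff_bounded) auto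
  have joint_moment: "(\<integral>\<^sup>+\<omega>. ennreal (exp (l * \<bar>X \<omega> - Z \<omega>\<bar>)) \<partial>?M) \<le> ennreal (12 * exp (2 * l\<^sup>2 * e\<^sup>2))"
    unfolding X_def Z_def by (rule nn_integral_joint_exp_weighted_dev_le[OF e l q q_sum samples])
  have "measure ?M {\<omega> \<in> space ?M. t \<le> \<bar>real_cond_exp ?M ?F X \<omega> - X \<omega>\<bar>}
      \<le> 2 * (12 * exp (2 * l\<^sup>2 * e\<^sup>2)) * exp (- (l * t / 2))"
  proof (rule measure_abs_diff_ge_le[OF l, where Z = Z])
    show "(\<integral>\<^sup>+\<omega>. ennreal (exp (l * \<bar>real_cond_exp ?M ?F X \<omega> - Z \<omega>\<bar>)) \<partial>?M) \<le> ennreal (12 * exp (2 * l\<^sup>2 * e\<^sup>2))"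
      using nn_integral_exp_abs_cond_exp_le[OF l X_integrable Z_integrable Z_measurable_F G_integrable]
        joint_moment by (rule order_trans)
  qed (use joint_moment in \<open>simp_all add: borel_measurable_cond_exp2\<close>)
  then show ?thesis by (simp only: X_def[abs_def])
qed

lemma weighted_deviation_tail_le:
  assumes e: "e > 0" and r: "r > 0" and q: "\<And>i. i < K \<Longrightarrow> q i \<ge> 0" and q_sum: "(\<Sum>i<K. q i) = 1"
    and samples: "\<forall>i<K. q i \<noteq> 0 \<longrightarrow> (AE \<omega> in bandit_joint K P pol n. real (num_samples (snd \<omega>) i) \<ge> 1 / e\<^sup>2)"
  shows "measure (bandit_post_model K P pol n)
           {\<omega> \<in> space (bandit_post_model K P pol n).
              r * e \<le> \<bar>(\<Sum>i<K. q i * snd (snd \<omega>) i) - (\<Sum>i<K. q i * fst \<omega> i)\<bar>}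
         \<le> 32 * exp (- (r\<^sup>2) / 32)"
    and "measure (bandit_joint K P pol n)
           {\<omega> \<in> space (bandit_joint K P pol n).
              r * e \<le> \<bar>real_cond_exp (bandit_joint K P pol n) (hist_algebra K P pol n) (\<lambda>\<omega>. \<Sum>i<K. q i * fst \<omega> i) \<omega>
                   - (\<Sum>i<K. q i * fst \<omega> i)\<bar>}
         \<le> 32 * exp (- (r\<^sup>2) / 32)"
proof -
  define l where "l = r / (8 * e)"
  have l: "l \<ge> 0" using e r by (simp add: l_def)
  have "2 * (12 * exp (2 * l\<^sup>2 * e\<^sup>2)) * exp (- (l * (r * e) / 2)) = 24 * exp (- (r\<^sup>2) / 32)"
  proof -
    have "2 * l\<^sup>2 * e\<^sup>2 + - (l * (r * e) / 2) = - (r\<^sup>2) / 32"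
      using e by (simp add: l_def power2_eq_square field_simps)
    then show ?thesis by (simp add: exp_add[symmetric])
  qed
  also have "\<dots> \<le> 32 * exp (- (r\<^sup>2) / 32)" by simp
  finally have arith: "2 * (12 * exp (2 * l\<^sup>2 * e\<^sup>2)) * exp (- (l * (r * e) / 2)) \<le> 32 * exp (- (r\<^sup>2) / 32)" .
  show "measure (bandit_post_model K P pol n)
           {\<omega> \<in> space (bandit_post_model K P pol n).
              r * e \<le> \<bar>(\<Sum>i<K. q i * snd (snd \<omega>) i) - (\<Sum>i<K. q i * fst \<omega> i)\<bar>}
         \<le> 32 * exp (- (r\<^sup>2) / 32)"
    using measure_post_model_weighted_dev_ge_le[OF e l q q_sum samples] arith by (rule order_trans)
  show "measure (bandit_joint K P pol n)
           {\<omega> \<in> space (bandit_joint K P pol n).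
              r * e \<le> \<bar>real_cond_exp (bandit_joint K P pol n) (hist_algebra K P pol n) (\<lambda>\<omega>. \<Sum>i<K. q i * fst \<omega> i) \<omega>
                   - (\<Sum>i<K. q i * fst \<omega> i)\<bar>}
         \<le> 32 * exp (- (r\<^sup>2) / 32)"
    using measure_cond_exp_weighted_dev_ge_le[OF e l q q_sum samples] arith by (rule order_trans)
qed

lemma arm_deviation_tail_le:
  assumes e: "e > 0" and r: "r > 0" and i: "i < K"
    and samples: "AE \<omega> in bandit_joint K P pol n. real (num_samples (snd \<omega>) i) \<ge> 1 / e\<^sup>2"
  shows "measure (bandit_post_model K P pol n)
           {\<omega> \<in> space (bandit_post_model K P pol n). \<bar>snd (snd \<omega>) i - fst \<omega> i\<bar> \<ge> r * e}
         \<le> 32 * exp (- (r\<^sup>2) / 32)"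
    and "measure (bandit_joint K P pol n)
           {\<omega> \<in> space (bandit_joint K P pol n).
              \<bar>real_cond_exp (bandit_joint K P pol n) (hist_algebra K P pol n) (\<lambda>\<omega>. fst \<omega> i) \<omega>
                 - fst \<omega> i\<bar> \<ge> r * e}
         \<le> 32 * exp (- (r\<^sup>2) / 32)"
proof -
  define q :: "nat \<Rightarrow> real" where "q j = (if j = i then 1 else 0)" for j
  have pick: "(\<Sum>j<K. q j * x j) = x i" for x :: "nat \<Rightarrow> real"
    using i by (simp add: q_def if_distrib[of "\<lambda>c. c * _"] cong: if_cong)
  have "\<forall>j<K. q j \<noteq> 0 \<longrightarrow> (AE \<omega> in bandit_joint K P pol n. real (num_samples (snd \<omega>) j) \<ge> 1 / e\<^sup>2)"
    using samples by (simp add: q_def)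
  note weighted = weighted_deviation_tail_le[OF e r _ _ this]
  from weighted(1) show "measure (bandit_post_model K P pol n)
      {\<omega> \<in> space (bandit_post_model K P pol n). \<bar>snd (snd \<omega>) i - fst \<omega> i\<bar> \<ge> r * e}
    \<le> 32 * exp (- (r\<^sup>2) / 32)"
    using i by (simp only: pick) (simp_all add: q_def)
  from weighted(2) show "measure (bandit_joint K P pol n)
      {\<omega> \<in> space (bandit_joint K P pol n).
         \<bar>real_cond_exp (bandit_joint K P pol n) (hist_algebra K P pol n) (\<lambda>\<omega>. fst \<omega> i) \<omega>
            - fst \<omega> i\<bar> \<ge> r * e}
    \<le> 32 * exp (- (r\<^sup>2) / 32)"
    using i by (simp only: pick) (simp_all add: q_def)
qed

end

theorem lemma2p1:
  "\<exists>C::real. C > 0 \<and>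
    (\<forall>(K::nat) (P::nat \<Rightarrow> real measure) (pol::history \<Rightarrow> nat pmf) (t::nat) (\<epsilon>::real) (r::real).
      (\<forall>i<K. prob_space (P i) \<and> sets (P i) = sets borel \<and> measure (P i) {0..1} = 1) \<longrightarrow>
      (\<forall>h. set_pmf (pol h) \<subseteq> {..<K}) \<longrightarrow>
      \<epsilon> > 0 \<longrightarrow> r > 0 \<longrightarrow>
      (\<forall>i<K.
         (AE \<omega> in bandit_joint K P pol t. real (num_samples (snd \<omega>) i) \<ge> 1 / \<epsilon>\<^sup>2) \<longrightarrow>
         measure (bandit_post_model K P pol t)
           {\<omega> \<in> space (bandit_post_model K P pol t).
              \<bar>snd (snd \<omega>) i - fst \<omega> i\<bar> \<ge> r * \<epsilon>} \<le> C * exp (- (r\<^sup>2) / C) \<and>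
         measure (bandit_joint K P pol t)
           {\<omega> \<in> space (bandit_joint K P pol t).
              \<bar>real_cond_exp (bandit_joint K P pol t) (hist_algebra K P pol t) (\<lambda>\<omega>. fst \<omega> i) \<omega>
                 - fst \<omega> i\<bar> \<ge> r * \<epsilon>} \<le> C * exp (- (r\<^sup>2) / C)) \<and>
      (\<forall>q::nat \<Rightarrow> real.
         (\<forall>i<K. q i \<ge> 0) \<longrightarrow> (\<Sum>i<K. q i) = 1 \<longrightarrow>
         (\<forall>i<K. q i \<noteq> 0 \<longrightarrow>
            (AE \<omega> in bandit_joint K P pol t. real (num_samples (snd \<omega>) i) \<ge> 1 / \<epsilon>\<^sup>2)) \<longrightarrow>
         measure (bandit_post_model K P pol t)
           {\<omega> \<in> space (bandit_post_model K P pol t).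
              \<bar>(\<Sum>i<K. q i * snd (snd \<omega>) i) - (\<Sum>i<K. q i * fst \<omega> i)\<bar> \<ge> r * \<epsilon>}
           \<le> C * exp (- (r\<^sup>2) / C) \<and>
         measure (bandit_joint K P pol t)
           {\<omega> \<in> space (bandit_joint K P pol t).
              \<bar>real_cond_exp (bandit_joint K P pol t) (hist_algebra K P pol t)
                   (\<lambda>\<omega>. \<Sum>i<K. q i * fst \<omega> i) \<omega>
                 - (\<Sum>i<K. q i * fst \<omega> i)\<bar> \<ge> r * \<epsilon>} \<le> C * exp (- (r\<^sup>2) / C)))"
  by (intro exI[of _ 32] conjI allI impI)
     ((rule bandit_model.arm_deviation_tail_le bandit_model.weighted_deviation_tail_le;
       auto simp: bandit_model_def) | simp)+

end
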